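(* Let $G=(V,E)$ be a circular arc graph which is not an interval graph, let $M=(C,\mathcal A)$ be a circular arc model of $G$, let $p$ be any point of $C$, let $A$ be the set of vertices whose arcs contain $p$, and let $B=V\setminus A$. Let $G'=(V,E')$ with $E'=E\cup\{\{u',v'\}: u',v'\in B,\ u'\neq v'\}$. Then $G'$ is a co-bipartite circular arc graph.
   Context: A circular arc model $M=(C,\mathcal A)$ of $G$ consists of a circle $C$ and arcs of $C$, one per vertex, such that two vertices are adjacent iff their arcs intersect; a circular arc graph is a graph having such a model. An interval graph is the intersection graph of a finite family of intervals of the real line. A graph is co-bipartite if its vertex set can be partitioned into two cliques. *)

theory Defs
  imports Complex_Main
begin

definition simple_graph :: "'a set \<Rightarrow> 'a set set \<Rightarrow> bool" where
  "simple_graph V E \<longleftrightarrow> finite V \<and> (\<forall>e\<in>E. e \<subseteq> V \<and> card e = 2)"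

text \<open>The circle C is modelled as R/Z, with points represented in [0,1).
  A (closed) arc from a to b (a \<le> b) is the image of the real interval [a,b]
  under the quotient map x \<mapsto> frac x.\<close>
definition circle :: "real set" where
  "circle = {0..<1}"

definition carc :: "real \<Rightarrow> real \<Rightarrow> real set" where
  "carc a b = frac ` {a..b}"

definition ca_model :: "'a set \<Rightarrow> 'a set set \<Rightarrow> ('a \<Rightarrow> real) \<Rightarrow> ('a \<Rightarrow> real) \<Rightarrow> bool" where
  "ca_model V E l r \<longleftrightarrow> (\<forall>v\<in>V. l v \<le> r v) \<and>
     (\<forall>u\<in>V. \<forall>v\<in>V. u \<noteq> v \<longrightarrow>
        ({u, v} \<in> E \<longleftrightarrow> carc (l u) (r u) \<inter> carc (l v) (r v) \<noteq> {}))"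

definition circular_arc_graph :: "'a set \<Rightarrow> 'a set set \<Rightarrow> bool" where
  "circular_arc_graph V E \<longleftrightarrow> simple_graph V E \<and> (\<exists>l r. ca_model V E l r)"

definition interval_graph :: "'a set \<Rightarrow> 'a set set \<Rightarrow> bool" where
  "interval_graph V E \<longleftrightarrow> simple_graph V E \<and> (\<exists>l r :: 'a \<Rightarrow> real.
     (\<forall>v\<in>V. l v \<le> r v) \<and>
     (\<forall>u\<in>V. \<forall>v\<in>V. u \<noteq> v \<longrightarrow>
        ({u, v} \<in> E \<longleftrightarrow> {l u..r u} \<inter> {l v..r v} \<noteq> {})))"

definition is_clique :: "'a set set \<Rightarrow> 'a set \<Rightarrow> bool" where
  "is_clique E K \<longleftrightarrow> (\<forall>u\<in>K. \<forall>v\<in>K. u \<noteq> v \<longrightarrow> {u, v} \<in> E)"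

definition co_bipartite :: "'a set \<Rightarrow> 'a set set \<Rightarrow> bool" where
  "co_bipartite V E \<longleftrightarrow> simple_graph V E \<and>
     (\<exists>X Y. X \<union> Y = V \<and> X \<inter> Y = {} \<and> is_clique E X \<and> is_clique E Y)"

end

theory Submission
  imports Defs
begin

(* Measure positions on the circle from p, so that every arc lifts to a real interval [s, t]
  with 0 \<le> t < 1; the arcs through p are exactly those with s \<le> 0. Halve every arc through p
  (an arc of length at least 1 stays the whole circle) and replace every arc [s, t] avoiding p
  by [s/2, (1 + t)/2]. Then all arcs avoiding p contain 1/2 and meet pairwise, the arcs through
  p still contain 0, and an arc [s1, t1] through p meets an arc [s2, t2] avoiding p iff
  s2 \<le> t1 or 1 + s1 \<le> t2, a condition the transformation preserves. *)

definition arcs_meet :: "real \<Rightarrow> real \<Rightarrow> real \<Rightarrow> real \<Rightarrow> bool" where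
  "arcs_meet a b c d \<longleftrightarrow> (\<exists>m::int. a \<le> d + of_int m \<and> c + of_int m \<le> b)"

lemma carc_Int_carc_nonempty_iff:
  assumes "a \<le> b" "c \<le> d"
  shows "carc a b \<inter> carc c d \<noteq> {} \<longleftrightarrow> arcs_meet a b c d"
proof
  assume "carc a b \<inter> carc c d \<noteq> {}"
  then obtain u w where u: "u \<in> {a..b}" and w: "w \<in> {c..d}" and "frac u = frac w"
    unfolding carc_def by blast
  then have "u - w = of_int (\<lfloor>u\<rfloor> - \<lfloor>w\<rfloor>)" by (simp add: frac_def)
  with u w show "arcs_meet a b c d"
    unfolding arcs_meet_def by (intro exI[of _ "\<lfloor>u\<rfloor> - \<lfloor>w\<rfloor>"]) auto
next
  assume "arcs_meet a b c d"
  then obtain m :: int where m: "a \<le> d + of_int m" "c + of_int m \<le> b"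
    unfolding arcs_meet_def by auto
  define u where "u = max a (c + of_int m)"
  have u: "u \<in> {a..b}" and w: "u - of_int m \<in> {c..d}" using m assms by (auto simp: u_def)
  have "frac (u - of_int m) = frac u"
    by (simp add: frac_def)
  with u w have "frac u \<in> carc a b \<inter> carc c d" unfolding carc_def by (metis IntI imageI)
  then show "carc a b \<inter> carc c d \<noteq> {}" by blast
qed

lemma mem_carc_iff_floor:
  assumes "0 \<le> p" "p < 1"
  shows "p \<in> carc a b \<longleftrightarrow> a \<le> p + of_int \<lfloor>b - p\<rfloor>"
proof
  assume "p \<in> carc a b"
  then obtain u where u: "a \<le> u" "u \<le> b" "p = frac u" unfolding carc_def by auto
  then have "\<lfloor>u\<rfloor> \<le> \<lfloor>b - p\<rfloor>" by (simp add: frac_def le_floor_iff)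
  with u show "a \<le> p + of_int \<lfloor>b - p\<rfloor>" by (simp add: frac_def)
next
  assume "a \<le> p + of_int \<lfloor>b - p\<rfloor>"
  moreover have "p + of_int \<lfloor>b - p\<rfloor> \<le> b" by linarith
  moreover have "frac (p + of_int \<lfloor>b - p\<rfloor>) = p" using assms by (simp add: frac_eq)
  ultimately show "p \<in> carc a b" unfolding carc_def by (metis atLeastAtMost_iff imageI)
qed

lemma arcs_meet_commute: "arcs_meet a b c d \<longleftrightarrow> arcs_meet c d a b"
proof -
  have "arcs_meet a b c d" if "arcs_meet c d a b" for a b c d
  proof -
    from that obtain m :: int where "c \<le> b + of_int m" "a + of_int m \<le> d"
      unfolding arcs_meet_def by auto
    then show ?thesis unfolding arcs_meet_def by (intro exI[of _ "- m"]) auto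
  qed
  then show ?thesis by blast
qed

lemma arcs_meet_shift:
  "arcs_meet (z + a + of_int i) (z + b + of_int i) (z + c + of_int j) (z + d + of_int j)
     \<longleftrightarrow> arcs_meet a b c d"
proof -
  have "(\<exists>m::int. z + a + i \<le> z + d + j + m \<and> z + c + j + m \<le> z + b + i)
      \<longleftrightarrow> (\<exists>m::int. a \<le> d + (j + m - i) \<and> c + (j + m - i) \<le> b)"
    by (simp add: algebra_simps)
  also have "\<dots> \<longleftrightarrow> (\<exists>m::int. a \<le> d + m \<and> c + m \<le> b)"
    by (metis add_diff_cancel_left' diff_add_cancel add.commute)
  finally show ?thesis unfolding arcs_meet_def by simp
qed

lemma arcs_meet_translate: "arcs_meet (z + a) (z + b) (z + c) (z + d) \<longleftrightarrow> arcs_meet a b c d"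
  using arcs_meet_shift[where i = 0 and j = 0] by simp

lemma arcs_meet_if_common_point:
  "a \<le> q \<Longrightarrow> q \<le> b \<Longrightarrow> c \<le> q \<Longrightarrow> q \<le> d \<Longrightarrow> arcs_meet a b c d"
  unfolding arcs_meet_def by (intro exI[of _ 0]) auto

lemma arcs_meet_if_long:
  assumes "1 \<le> b - a" "c \<le> d"
  shows "arcs_meet a b c d"
  unfolding arcs_meet_def using assms by (intro exI[of _ "\<lceil>a - d\<rceil>"]) linarith

lemma arcs_meet_through_avoiding_iff:
  assumes "s1 \<le> 0" "0 \<le> t1" "t1 - s1 < 1" "0 < s2" "s2 \<le> t2" "t2 < 1"
  shows "arcs_meet s1 t1 s2 t2 \<longleftrightarrow> s2 \<le> t1 \<or> 1 + s1 \<le> t2"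
proof
  assume "arcs_meet s1 t1 s2 t2"
  then obtain m :: int where m: "s1 \<le> t2 + m" "s2 + m \<le> t1" unfolding arcs_meet_def by auto
  with assms have "-2 < m" "m < 1" by linarith+
  then have "m = 0 \<or> m = -1" by linarith
  with m show "s2 \<le> t1 \<or> 1 + s1 \<le> t2" by auto
next
  assume "s2 \<le> t1 \<or> 1 + s1 \<le> t2"
  then show "arcs_meet s1 t1 s2 t2"
  proof
    assume "s2 \<le> t1"
    with assms show ?thesis unfolding arcs_meet_def by (intro exI[of _ 0]) auto
  next
    assume "1 + s1 \<le> t2"
    with assms show ?thesis unfolding arcs_meet_def by (intro exI[of _ "-1"]) auto
  qed
qed

definition squeeze_start :: "real \<Rightarrow> real \<Rightarrow> real" where
  "squeeze_start s t = (if s \<le> 0 \<and> 1 \<le> t - s then 0 else s / 2)"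

definition squeeze_end :: "real \<Rightarrow> real \<Rightarrow> real" where
  "squeeze_end s t = (if 0 < s then (1 + t) / 2 else if 1 \<le> t - s then 1 else t / 2)"

lemma squeeze_start_le_end: "s \<le> t \<Longrightarrow> squeeze_start s t \<le> squeeze_end s t"
  by (simp add: squeeze_start_def squeeze_end_def)

lemma arcs_meet_squeeze_through_avoiding:
  assumes "s1 \<le> 0" "0 \<le> t1" "0 < s2" "s2 \<le> t2" "t2 < 1"
  shows "arcs_meet (squeeze_start s1 t1) (squeeze_end s1 t1) (squeeze_start s2 t2) (squeeze_end s2 t2)
    \<longleftrightarrow> arcs_meet s1 t1 s2 t2"
proof (cases "1 \<le> t1 - s1")
  case True
  with assms show ?thesis
    using arcs_meet_if_long squeeze_start_le_end by (simp add: squeeze_start_def squeeze_end_def)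
next
  case False
  with assms have "arcs_meet s1 t1 s2 t2 \<longleftrightarrow> s2 \<le> t1 \<or> 1 + s1 \<le> t2"
    by (intro arcs_meet_through_avoiding_iff) auto
  also have "\<dots> \<longleftrightarrow> s2 / 2 \<le> t1 / 2 \<or> 1 + s1 / 2 \<le> (1 + t2) / 2"
    by auto
  also have "\<dots> \<longleftrightarrow> arcs_meet (s1 / 2) (t1 / 2) (s2 / 2) ((1 + t2) / 2)"
    using assms False by (intro arcs_meet_through_avoiding_iff[symmetric]) auto
  finally show ?thesis
    using assms False by (simp add: squeeze_start_def squeeze_end_def)
qed

lemma arcs_meet_squeeze_iff:
  assumes "s1 \<le> t1" "0 \<le> t1" "t1 < 1" "s2 \<le> t2" "0 \<le> t2" "t2 < 1"
  shows "arcs_meet (squeeze_start s1 t1) (squeeze_end s1 t1) (squeeze_start s2 t2) (squeeze_end s2 t2)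
    \<longleftrightarrow> arcs_meet s1 t1 s2 t2 \<or> (0 < s1 \<and> 0 < s2)"
proof -
  consider "0 < s1" "0 < s2" | "s1 \<le> 0" "s2 \<le> 0" | "s1 \<le> 0" "0 < s2" | "0 < s1" "s2 \<le> 0"
    by linarith
  then show ?thesis
  proof cases
    case 1
    with assms show ?thesis
      using arcs_meet_if_common_point[of _ "1/2"] by (simp add: squeeze_start_def squeeze_end_def)
  next
    case 2
    with assms have "arcs_meet s1 t1 s2 t2"
      using arcs_meet_if_common_point[of _ 0] by simp
    moreover from 2 assms have "arcs_meet (squeeze_start s1 t1) (squeeze_end s1 t1)
        (squeeze_start s2 t2) (squeeze_end s2 t2)"
      using arcs_meet_if_common_point[of _ 0] by (simp add: squeeze_start_def squeeze_end_def)
    ultimately show ?thesis by simp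
  next
    case 3
    with assms show ?thesis using arcs_meet_squeeze_through_avoiding by simp
  next
    case 4
    have "arcs_meet (squeeze_start s1 t1) (squeeze_end s1 t1) (squeeze_start s2 t2) (squeeze_end s2 t2)
        \<longleftrightarrow> arcs_meet (squeeze_start s2 t2) (squeeze_end s2 t2) (squeeze_start s1 t1) (squeeze_end s1 t1)"
      by (rule arcs_meet_commute)
    also have "\<dots> \<longleftrightarrow> arcs_meet s2 t2 s1 t1"
      using 4 assms by (intro arcs_meet_squeeze_through_avoiding) auto
    also have "\<dots> \<longleftrightarrow> arcs_meet s1 t1 s2 t2"
      by (rule arcs_meet_commute)
    finally show ?thesis using 4 by simp
  qed
qed

lemma ca_model_arc_le: "ca_model V E l r \<Longrightarrow> v \<in> V \<Longrightarrow> l v \<le> r v"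
  by (simp add: ca_model_def)

lemma ca_model_edge_iff:
  assumes "ca_model V E l r" "u \<in> V" "v \<in> V" "u \<noteq> v"
  shows "{u, v} \<in> E \<longleftrightarrow> arcs_meet (l u) (r u) (l v) (r v)"
proof -
  have "{u, v} \<in> E \<longleftrightarrow> carc (l u) (r u) \<inter> carc (l v) (r v) \<noteq> {}"
    using assms by (simp add: ca_model_def)
  with carc_Int_carc_nonempty_iff[OF ca_model_arc_le[OF assms(1,2)] ca_model_arc_le[OF assms(1,3)]]
  show ?thesis by simp
qed

lemma is_clique_arcs_through_point:
  assumes "ca_model V E l r"
  shows "is_clique E {v \<in> V. p \<in> carc (l v) (r v)}"
  unfolding is_clique_def
proof (intro ballI impI)
  fix u v assume u: "u \<in> {v \<in> V. p \<in> carc (l v) (r v)}" and v: "v \<in> {v \<in> V. p \<in> carc (l v) (r v)}"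
    and "u \<noteq> v"
  then have "carc (l u) (r u) \<inter> carc (l v) (r v) \<noteq> {}" by blast
  with assms u v \<open>u \<noteq> v\<close> show "{u, v} \<in> E" by (simp add: ca_model_def)
qed

lemma simple_graph_Un_clique:
  assumes "simple_graph V E" "B \<subseteq> V"
  shows "simple_graph V (E \<union> {{u, v} | u v. u \<in> B \<and> v \<in> B \<and> u \<noteq> v})"
  using assms unfolding simple_graph_def by auto

lemma ca_model_Un_clique_avoiding_point:
  assumes model: "ca_model V E l r" and "0 \<le> p" "p < 1"
    and B: "B = V - {v \<in> V. p \<in> carc (l v) (r v)}"
  shows "\<exists>l' r'. ca_model V (E \<union> {{u, v} | u v. u \<in> B \<and> v \<in> B \<and> u \<noteq> v}) l' r'"
proof -
  define k where "k v = \<lfloor>r v - p\<rfloor>" for v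
  define t where "t v = r v - p - of_int (k v)" for v
  define s where "s v = l v - p - of_int (k v)" for v
  have normal: "s v \<le> t v" "0 \<le> t v" "t v < 1" if "v \<in> V" for v
    using ca_model_arc_le[OF model that] unfolding s_def t_def k_def by linarith+
  have avoiding: "v \<in> B \<longleftrightarrow> 0 < s v" if "v \<in> V" for v
  proof -
    have "v \<in> B \<longleftrightarrow> \<not> l v \<le> p + of_int (k v)"
      using that mem_carc_iff_floor[OF \<open>0 \<le> p\<close> \<open>p < 1\<close>] by (simp add: B k_def)
    then show ?thesis unfolding s_def by linarith
  qed
  have old_edge: "{u, v} \<in> E \<longleftrightarrow> arcs_meet (s u) (t u) (s v) (t v)"
    if "u \<in> V" "v \<in> V" "u \<noteq> v" for u v
  proof -
    have "{u, v} \<in> E \<longleftrightarrow> arcs_meet (l u) (r u) (l v) (r v)"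
      using ca_model_edge_iff[OF model that] .
    also have "\<dots> \<longleftrightarrow> arcs_meet (p + s u + of_int (k u)) (p + t u + of_int (k u))
        (p + s v + of_int (k v)) (p + t v + of_int (k v))"
      by (simp add: s_def t_def)
    finally show ?thesis by (simp only: arcs_meet_shift)
  qed
  define l' where "l' v = p + squeeze_start (s v) (t v)" for v
  define r' where "r' v = p + squeeze_end (s v) (t v)" for v
  have lr': "l' v \<le> r' v" if "v \<in> V" for v
    using normal[OF that] squeeze_start_le_end by (simp add: l'_def r'_def)
  have "ca_model V (E \<union> {{u, v} | u v. u \<in> B \<and> v \<in> B \<and> u \<noteq> v}) l' r'"
    unfolding ca_model_def
  proof (intro conjI ballI impI)
    fix v assume "v \<in> V" then show "l' v \<le> r' v" by (rule lr')
  next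
    fix u v assume uv: "u \<in> V" "v \<in> V" "u \<noteq> v"
    have "carc (l' u) (r' u) \<inter> carc (l' v) (r' v) \<noteq> {}
        \<longleftrightarrow> arcs_meet (squeeze_start (s u) (t u)) (squeeze_end (s u) (t u))
          (squeeze_start (s v) (t v)) (squeeze_end (s v) (t v))"
      using uv lr' carc_Int_carc_nonempty_iff by (simp add: l'_def r'_def arcs_meet_translate)
    also have "\<dots> \<longleftrightarrow> arcs_meet (s u) (t u) (s v) (t v) \<or> (0 < s u \<and> 0 < s v)"
      using uv normal by (intro arcs_meet_squeeze_iff)
    also have "\<dots> \<longleftrightarrow> {u, v} \<in> E \<or> (u \<in> B \<and> v \<in> B)"
      using uv old_edge avoiding by simp
    also have "\<dots> \<longleftrightarrow> {u, v} \<in> E \<union> {{u, v} | u v. u \<in> B \<and> v \<in> B \<and> u \<noteq> v}"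
      using uv by (auto simp: doubleton_eq_iff)
    finally show "{u, v} \<in> E \<union> {{u, v} | u v. u \<in> B \<and> v \<in> B \<and> u \<noteq> v}
        \<longleftrightarrow> carc (l' u) (r' u) \<inter> carc (l' v) (r' v) \<noteq> {}" by simp
  qed
  then show ?thesis by blast
qed

theorem lemma6:
  fixes V :: "'a set" and E :: "'a set set" and l r :: "'a \<Rightarrow> real" and p :: real
    and B :: "'a set"
  assumes "circular_arc_graph V E"
    and "\<not> interval_graph V E"
    and "ca_model V E l r"
    and "p \<in> circle"
    and "B = V - {v \<in> V. p \<in> carc (l v) (r v)}"
  shows "co_bipartite V (E \<union> {{u', v'} | u' v'. u' \<in> B \<and> v' \<in> B \<and> u' \<noteq> v'})
       \<and> circular_arc_graph V (E \<union> {{u', v'} | u' v'. u' \<in> B \<and> v' \<in> B \<and> u' \<noteq> v'})"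
proof -
  let ?E' = "E \<union> {{u', v'} | u' v'. u' \<in> B \<and> v' \<in> B \<and> u' \<noteq> v'}"
  let ?A = "{v \<in> V. p \<in> carc (l v) (r v)}"
  have "simple_graph V E" using assms(1) by (simp add: circular_arc_graph_def)
  then have simple: "simple_graph V ?E'"
    using assms(5) by (intro simple_graph_Un_clique) auto
  have "is_clique ?E' ?A"
    using is_clique_arcs_through_point[OF assms(3)] by (auto simp: is_clique_def)
  moreover have "is_clique ?E' B"
    by (auto simp: is_clique_def)
  moreover have "?A \<union> B = V" "?A \<inter> B = {}"
    using assms(5) by auto
  ultimately have "co_bipartite V ?E'"
    using simple unfolding co_bipartite_def by blast
  moreover have "\<exists>l' r'. ca_model V ?E' l' r'"
    using ca_model_Un_clique_avoiding_point[OF assms(3) _ _ assms(5)] assms(4)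
    by (simp add: circle_def)
  ultimately show ?thesis
    using simple by (simp add: circular_arc_graph_def)
qed

end
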